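(* Let $(c_1,\dots,c_m)\in\mathbb{C}^m$ be such that $\prod_{j=1}^m\eta(c_j)$ is a scalar multiple of the identity matrix. Then there are two different indices $j,k\in\{1,\dots,m\}$ with $|c_j|<2$ and $|c_k|<2$.
   Context: For $c\in\mathbb{C}$, $\eta(c)=\begin{pmatrix}c&-1\\1&0\end{pmatrix}$. *)

theory Defs
  imports "HOL-Analysis.Analysis"
begin

definition eta :: "complex \<Rightarrow> complex^2^2" where
  "eta c = vector [vector [c, -1], vector [1, 0]]"

definition eta_prod :: "complex list \<Rightarrow> complex^2^2" where
  "eta_prod cs = foldr (\<lambda>c M. eta c ** M) cs (mat 1)"

end

theory Submission
  imports Defs
begin

text \<open>
  If all of \<open>c\<^sub>1, \<dots>, c\<^sub>m\<^sub>-\<^sub>1\<close> had modulus at least 2, the first row \<open>(x, y)\<close> of the partial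
  products would stay dominant, \<open>|x| \<ge> |y| + 1\<close>: multiplying by \<open>\<eta>(c)\<close> sends it to
  \<open>(c x + y, -x)\<close>. The \<open>(1,2)\<close> entry of the full product is then \<open>-x \<noteq> 0\<close>, so the product is
  not scalar. Hence some \<open>c\<^sub>j\<close> with \<open>j < m\<close> is small. A product equal to a scalar matrix
  stays scalar under cyclic rotation of its factors; rotating \<open>c\<^sub>j\<close> into the last position
  yields a second small entry at a different index.
\<close>

lemma matrix_mul_mat_commute:
  fixes A :: "'a::comm_semiring_1^'n^'n"
  shows "A ** mat a = mat a ** A"
  unfolding matrix_matrix_mult_def mat_def
  by (simp add: vec_eq_iff if_distrib if_distribR sum.delta sum.delta' mult.commute cong: if_cong)

lemma matrix_mul_eq_mat_swap:
  fixes A B :: "'a::comm_ring_1^'n^'n"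
  assumes "A ** B = mat a" and "invertible A"
  shows "B ** A = mat a"
proof -
  obtain A' where A': "A' ** A = mat 1" "A ** A' = mat 1"
    using assms(2) invertible_def by blast
  have "B = A' ** mat a"
    using A'(1) assms(1) by (metis matrix_mul_assoc matrix_mul_lid)
  then have "B ** A = A' ** (A ** mat a)"
    by (simp add: matrix_mul_assoc matrix_mul_mat_commute)
  also have "\<dots> = mat a"
    using A'(1) by (metis matrix_mul_assoc matrix_mul_lid)
  finally show ?thesis .
qed

lemma matrix_mul_2_nth:
  fixes A B :: "'a::semiring_1^2^2"
  shows "(A ** B) $ i $ j = A $ i $ 1 * B $ 1 $ j + A $ i $ 2 * B $ 2 $ j"
  by (simp add: matrix_matrix_mult_def UNIV_2)

lemma eta_nth: "eta c $ 1 $ 1 = c" "eta c $ 1 $ 2 = -1" "eta c $ 2 $ 1 = 1" "eta c $ 2 $ 2 = 0"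
  by (simp_all add: eta_def vector_1 vector_2)

lemma eta_prod_Nil: "eta_prod [] = mat 1"
  by (simp add: eta_prod_def)

lemma eta_prod_Cons: "eta_prod (c # cs) = eta c ** eta_prod cs"
  by (simp add: eta_prod_def)

lemma eta_prod_append: "eta_prod (xs @ ys) = eta_prod xs ** eta_prod ys"
  by (induction xs) (simp_all add: eta_prod_Nil eta_prod_Cons matrix_mul_assoc)

lemma eta_prod_snoc: "eta_prod (cs @ [c]) = eta_prod cs ** eta c"
  by (simp add: eta_prod_append eta_prod_Cons eta_prod_Nil)

lemma det_eta_prod: "det (eta_prod cs) = 1"
proof (induction cs)
  case Nil
  show ?case by (simp add: eta_prod_Nil)
next
  case (Cons c cs)
  have "det (eta c) = 1"
    by (simp add: det_2 eta_nth)
  with Cons show ?case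
    by (simp add: eta_prod_Cons det_mul)
qed

lemma eta_prod_eq_mat_rotate:
  assumes "eta_prod (xs @ ys) = mat a"
  shows "eta_prod (ys @ xs) = mat a"
proof -
  have "eta_prod xs ** eta_prod ys = mat a"
    using assms by (simp add: eta_prod_append)
  moreover have "invertible (eta_prod xs)"
    by (simp add: invertible_det_nz det_eta_prod)
  ultimately have "eta_prod ys ** eta_prod xs = mat a"
    by (rule matrix_mul_eq_mat_swap)
  then show ?thesis
    by (simp add: eta_prod_append)
qed

lemma eta_prod_row_dominant:
  assumes "\<forall>c\<in>set cs. cmod c \<ge> 2" and "cmod x \<ge> cmod y + 1"
  shows "cmod (x * eta_prod cs $ 1 $ 1 + y * eta_prod cs $ 2 $ 1)
         \<ge> cmod (x * eta_prod cs $ 1 $ 2 + y * eta_prod cs $ 2 $ 2) + 1"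
  using assms
proof (induction cs arbitrary: x y)
  case Nil
  then show ?case by (simp add: eta_prod_Nil mat_def)
next
  case (Cons c cs)
  let ?P = "eta_prod cs"
  have row: "x * eta_prod (c # cs) $ 1 $ j + y * eta_prod (c # cs) $ 2 $ j
           = (c * x + y) * ?P $ 1 $ j + (- x) * ?P $ 2 $ j" for j
    by (simp add: eta_prod_Cons matrix_mul_2_nth eta_nth algebra_simps)
  have "cmod (c * x) \<ge> 2 * cmod x"
    using Cons.prems(1) by (simp add: norm_mult mult_right_mono)
  moreover have "cmod (c * x + y) \<ge> cmod (c * x) - cmod y"
    by (rule norm_diff_ineq)
  ultimately have "cmod (c * x + y) \<ge> cmod (- x) + 1"
    using Cons.prems(2) by simp
  with Cons.prems(1)
  have "cmod ((c * x + y) * ?P $ 1 $ 1 + (- x) * ?P $ 2 $ 1)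
        \<ge> cmod ((c * x + y) * ?P $ 1 $ 2 + (- x) * ?P $ 2 $ 2) + 1"
    by (intro Cons.IH) auto
  then show ?case
    by (simp only: row)
qed

lemma eta_prod_snoc_eq_mat_small:
  assumes "eta_prod (ds @ [c]) = mat a"
  shows "\<exists>j < length ds. cmod (ds ! j) < 2"
proof (rule ccontr)
  assume "\<not> ?thesis"
  then have "\<forall>d\<in>set ds. cmod d \<ge> 2"
    by (metis in_set_conv_nth not_less)
  from eta_prod_row_dominant[OF this, where x = 1 and y = 0]
  have "cmod (eta_prod ds $ 1 $ 1) \<ge> cmod (eta_prod ds $ 1 $ 2) + 1"
    by simp
  then have "cmod (eta_prod ds $ 1 $ 1) \<ge> 1"
    using norm_ge_zero[of "eta_prod ds $ 1 $ 2"] by linarith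
  moreover have "eta_prod (ds @ [c]) $ 1 $ 2 = - eta_prod ds $ 1 $ 1"
    by (simp add: eta_prod_snoc matrix_mul_2_nth eta_nth)
  moreover have "eta_prod (ds @ [c]) $ 1 $ 2 = 0"
    using assms by (simp add: mat_def)
  ultimately show False by simp
qed

theorem corollary3p3:
  fixes cs :: "complex list"
  assumes "cs \<noteq> []"
    and "\<exists>a::complex. eta_prod cs = mat a"
  shows "\<exists>j k. j < length cs \<and> k < length cs \<and> j \<noteq> k \<and>
           cmod (cs ! j) < 2 \<and> cmod (cs ! k) < 2"
proof -
  obtain a where a: "eta_prod cs = mat a" using assms(2) by blast
  obtain ds c where cs: "cs = ds @ [c]" using assms(1) by (metis rev_exhaust)
  obtain j where j: "j < length ds" "cmod (ds ! j) < 2"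
    using eta_prod_snoc_eq_mat_small a cs by blast
  then have j_cs: "j < length cs - 1" "cmod (cs ! j) < 2"
    using cs by (simp_all add: nth_append)
  let ?rest = "drop (Suc j) cs @ take j cs"
  have "cs = take j cs @ [cs ! j] @ drop (Suc j) cs"
    using id_take_nth_drop[of j cs] j_cs(1) by simp
  with a have "eta_prod (?rest @ [cs ! j]) = mat a"
    by (metis append_assoc eta_prod_eq_mat_rotate)
  then obtain i where i: "i < length ?rest" "cmod (?rest ! i) < 2"
    using eta_prod_snoc_eq_mat_small by blast
  define k where "k = (if i < length cs - Suc j then Suc j + i else i - (length cs - Suc j))"
  have "k < length cs" "k \<noteq> j" "cs ! k = ?rest ! i"
    using i(1) j_cs(1) by (auto simp: k_def nth_append)
  then show ?thesis
    using i(2) j_cs by (intro exI[of _ j] exI[of _ k]) auto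
qed

end
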